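(* The forgetful morphism $\imath:\mathcal{Q}(r,n)\to\mathcal{A}(r,n)$ is universally injective. That is, for any field $K\supseteq\mathbb{C}$ and any $K$-point $\alpha_K$ of $\mathcal{A}(r,n)$, there is at most one $K$-point $\varrho_K$ of $\mathcal{Q}(r,n)$ with $\imath(\varrho_K)=\alpha_K$.
   Context: Fix $V_\infty=\mathbb{C}^r$ with basis $e_a$ and $A_re_a=e_{a+1}$, $e_{r+1}=0$. $\mathcal{Q}(r,n)$ is the fine moduli space of framed cyclic representations $(V,B_1,B_2,B_3,I,J)$ up to $GL(V)$. These have $\dim V=n$ and satisfy $[B_1,B_2]+IJ=0$, $JB_3=A_rJ$, $B_3I=IA_r$ and $[B_3,B_i]=0$ for $i=1,2$; moreover no proper nonzero $B_1,B_2,B_3$-invariant subspace contains $\mathrm{Im}\,I$. $\mathcal{A}(r,n)$ is the fine moduli space of stable ADHM data $(V,B_1,B_2,I,J)$ with $[B_1,B_2]+IJ=0$ and no proper $B_1,B_2$-invariant subspace containing $\mathrm{Im}\,I$. The map $\imath$ forgets $B_3$. *)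

theory Defs
  imports Complex_Main "Jordan_Normal_Form.Matrix"
begin

text \<open>Shift matrix A_r on V_infty = K^r: A_r e_a = e_(a+1), e_(r+1) = 0 (0-based indices).\<close>
definition shift_mat :: "nat \<Rightarrow> 'k::field mat" where
  "shift_mat r = mat r r (\<lambda>(i,j). if i = j + 1 then 1 else 0)"

definition is_subspace :: "nat \<Rightarrow> 'k::field vec set \<Rightarrow> bool" where
  "is_subspace n S \<longleftrightarrow> S \<subseteq> carrier_vec n \<and> 0\<^sub>v n \<in> S \<and>
     (\<forall>u\<in>S. \<forall>v\<in>S. u + v \<in> S) \<and> (\<forall>c. \<forall>v\<in>S. c \<cdot>\<^sub>v v \<in> S)"

definition mat_invariant :: "'k::field mat \<Rightarrow> 'k vec set \<Rightarrow> bool" where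
  "mat_invariant B S \<longleftrightarrow> (\<forall>v\<in>S. B *\<^sub>v v \<in> S)"

definition mat_image :: "nat \<Rightarrow> 'k::field mat \<Rightarrow> 'k vec set" where
  "mat_image r I = {I *\<^sub>v w | w. w \<in> carrier_vec r}"

definition stable_ADHM :: "nat \<Rightarrow> nat \<Rightarrow> 'k::field mat \<Rightarrow> 'k mat \<Rightarrow> 'k mat \<Rightarrow> 'k mat \<Rightarrow> bool" where
  "stable_ADHM r n B1 B2 I J \<longleftrightarrow>
     B1 \<in> carrier_mat n n \<and> B2 \<in> carrier_mat n n \<and> I \<in> carrier_mat n r \<and> J \<in> carrier_mat r n \<and>
     B1 * B2 - B2 * B1 + I * J = 0\<^sub>m n n \<and>
     (\<forall>S. is_subspace n S \<and> mat_invariant B1 S \<and> mat_invariant B2 S \<and> mat_image r I \<subseteq> S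
          \<longrightarrow> S = carrier_vec n)"

definition cyclic_rep :: "nat \<Rightarrow> nat \<Rightarrow> 'k::field mat \<Rightarrow> 'k mat \<Rightarrow> 'k mat \<Rightarrow> 'k mat \<Rightarrow> 'k mat \<Rightarrow> bool" where
  "cyclic_rep r n B1 B2 B3 I J \<longleftrightarrow>
     B1 \<in> carrier_mat n n \<and> B2 \<in> carrier_mat n n \<and> B3 \<in> carrier_mat n n \<and>
     I \<in> carrier_mat n r \<and> J \<in> carrier_mat r n \<and>
     B1 * B2 - B2 * B1 + I * J = 0\<^sub>m n n \<and>
     J * B3 = shift_mat r * J \<and> B3 * I = I * shift_mat r \<and>
     B3 * B1 = B1 * B3 \<and> B3 * B2 = B2 * B3 \<and>
     (\<forall>S. is_subspace n S \<and> S \<noteq> carrier_vec n \<and> S \<noteq> {0\<^sub>v n} \<and>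
          mat_invariant B1 S \<and> mat_invariant B2 S \<and> mat_invariant B3 S
          \<longrightarrow> \<not> mat_image r I \<subseteq> S)"

definition gl_pair :: "nat \<Rightarrow> 'k::field mat \<Rightarrow> 'k mat \<Rightarrow> bool" where
  "gl_pair n g h \<longleftrightarrow> g \<in> carrier_mat n n \<and> h \<in> carrier_mat n n \<and> g * h = 1\<^sub>m n \<and> h * g = 1\<^sub>m n"

text \<open>Two ADHM data are in the same GL(V)-orbit (same K-point of A(r,n)).\<close>
definition ADHM_equiv :: "nat \<Rightarrow> ('k::field mat \<times> 'k mat \<times> 'k mat \<times> 'k mat) \<Rightarrow>
    ('k mat \<times> 'k mat \<times> 'k mat \<times> 'k mat) \<Rightarrow> bool" where
  "ADHM_equiv n X Y \<longleftrightarrow> (case X of (B1, B2, I, J) \<Rightarrow> case Y of (C1, C2, I', J') \<Rightarrow>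
     (\<exists>g h. gl_pair n g h \<and> C1 = g * B1 * h \<and> C2 = g * B2 * h \<and> I' = g * I \<and> J' = J * h))"

text \<open>Two cyclic representations are in the same GL(V)-orbit (same K-point of Q(r,n)).\<close>
definition cyclic_equiv :: "nat \<Rightarrow> ('k::field mat \<times> 'k mat \<times> 'k mat \<times> 'k mat \<times> 'k mat) \<Rightarrow>
    ('k mat \<times> 'k mat \<times> 'k mat \<times> 'k mat \<times> 'k mat) \<Rightarrow> bool" where
  "cyclic_equiv n X Y \<longleftrightarrow> (case X of (B1, B2, B3, I, J) \<Rightarrow> case Y of (C1, C2, C3, I', J') \<Rightarrow>
     (\<exists>g h. gl_pair n g h \<and> C1 = g * B1 * h \<and> C2 = g * B2 * h \<and> C3 = g * B3 * h \<and>
            I' = g * I \<and> J' = J * h))"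

text \<open>K contains the complex numbers: a ring embedding of complex into K.\<close>
definition complex_embedding :: "(complex \<Rightarrow> 'k::field) \<Rightarrow> bool" where
  "complex_embedding \<phi> \<longleftrightarrow> \<phi> 1 = 1 \<and> (\<forall>x y. \<phi> (x + y) = \<phi> x + \<phi> y) \<and>
     (\<forall>x y. \<phi> (x * y) = \<phi> x * \<phi> y)"

end

theory Submission
  imports Defs
begin

text \<open>For stable ADHM data, the operator B3 of a cyclic representation lying over it is
  determined by B1, B2 and I: two matrices commuting with B1, B2 and intertwining I with A_r
  agree on a B1,B2-invariant subspace containing Im I, which by stability is all of V. So any
  two cyclic lifts of the same orbit become equal after moving both onto a common ADHM
  representative, and hence lie in the same orbit.\<close>

lemma mat_eq_if_mult_vec_eq:
  fixes E F :: "'k::field mat"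
  assumes "E \<in> carrier_mat m n" "F \<in> carrier_mat m n"
    and "\<And>v. v \<in> carrier_vec n \<Longrightarrow> E *\<^sub>v v = F *\<^sub>v v"
  shows "E = F"
proof (rule eq_matI)
  fix i j assume "i < dim_row F" "j < dim_col F"
  moreover have "(E *\<^sub>v unit_vec n j) $ i = (F *\<^sub>v unit_vec n j) $ i"
    using assms(3) by simp
  ultimately show "E $$ (i, j) = F $$ (i, j)"
    using assms(1,2) by (simp add: mult_mat_vec_def)
qed (use assms in auto)

lemma stable_ADHM_hom_unique:
  fixes E F :: "'k::field mat"
  assumes stable: "stable_ADHM r n B1 B2 I J"
    and carrier: "E \<in> carrier_mat m n" "F \<in> carrier_mat m n"
      "C1 \<in> carrier_mat m m" "C2 \<in> carrier_mat m m"
    and hom_E: "E * B1 = C1 * E" "E * B2 = C2 * E"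
    and hom_F: "F * B1 = C1 * F" "F * B2 = C2 * F"
    and on_image: "E * I = F * I"
  shows "E = F"
proof -
  from stable have B: "B1 \<in> carrier_mat n n" "B2 \<in> carrier_mat n n" "I \<in> carrier_mat n r"
    unfolding stable_ADHM_def by auto
  define S where "S = {v \<in> carrier_vec n. E *\<^sub>v v = F *\<^sub>v v}"
  have "is_subspace n S"
    unfolding is_subspace_def S_def
    using carrier by (auto simp: mult_add_distrib_mat_vec mult_mat_vec)
  moreover have "mat_invariant B S" if "B \<in> carrier_mat n n" "C \<in> carrier_mat m m"
    "E * B = C * E" "F * B = C * F" for B C
    unfolding mat_invariant_def S_def
  proof clarify
    fix v :: "'k vec" assume v: "v \<in> carrier_vec n" "E *\<^sub>v v = F *\<^sub>v v"
    have "E *\<^sub>v (B *\<^sub>v v) = C *\<^sub>v (E *\<^sub>v v)"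
      using that v carrier by (metis assoc_mult_mat_vec)
    also have "\<dots> = F *\<^sub>v (B *\<^sub>v v)"
      using that v carrier by (metis assoc_mult_mat_vec)
    finally show "B *\<^sub>v v \<in> carrier_vec n \<and> E *\<^sub>v (B *\<^sub>v v) = F *\<^sub>v (B *\<^sub>v v)"
      using that v by simp
  qed
  moreover have "mat_image r I \<subseteq> S"
    unfolding mat_image_def S_def
    using B carrier on_image by (auto simp del: assoc_mult_mat_vec
        simp: assoc_mult_mat_vec[symmetric, of E m n I r] assoc_mult_mat_vec[symmetric, of F m n I r])
  ultimately have "S = carrier_vec n"
    using stable B carrier hom_E hom_F unfolding stable_ADHM_def by blast
  then show ?thesis
    using carrier by (intro mat_eq_if_mult_vec_eq) (auto simp: S_def)
qed

lemma conj_mult_conj: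
  fixes X Y :: "'k::field mat"
  assumes "gl_pair n g h" "X \<in> carrier_mat n n" "Y \<in> carrier_mat n n"
  shows "(g * X * h) * (g * Y * h) = g * (X * Y) * h"
proof -
  from assms(1) have g: "g \<in> carrier_mat n n" "h \<in> carrier_mat n n" "h * g = 1\<^sub>m n"
    unfolding gl_pair_def by auto
  have "(g * X * h) * (g * Y * h) = g * X * (h * g) * Y * h"
    using g(1,2) assms(2,3) by (simp add: assoc_mult_mat[of _ n n _ n _ n])
  then show ?thesis
    using g assms(2,3) by (simp add: assoc_mult_mat[of _ n n _ n _ n])
qed

lemma conj_mult_left_action:
  fixes X K :: "'k::field mat"
  assumes "gl_pair n g h" "X \<in> carrier_mat n n" "K \<in> carrier_mat n k"
  shows "(g * X * h) * (g * K) = g * (X * K)"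
proof -
  from assms(1) have g: "g \<in> carrier_mat n n" "h \<in> carrier_mat n n" "h * g = 1\<^sub>m n"
    unfolding gl_pair_def by auto
  have "(g * X * h) * (g * K) = g * X * (h * g) * K"
    using g(1,2) assms(2,3) by (simp add: assoc_mult_mat[of _ n n _ n _ k])
  then show ?thesis
    using g assms(2,3) by (simp add: assoc_mult_mat[of _ n n _ n _ k])
qed

lemma cyclic_rep_conj_relations:
  fixes C1 :: "'k::field mat"
  assumes "cyclic_rep r n C1 C2 C3 I1 J1" "gl_pair n g h"
  shows "(g * C3 * h) * (g * C1 * h) = (g * C1 * h) * (g * C3 * h)"
    and "(g * C3 * h) * (g * C2 * h) = (g * C2 * h) * (g * C3 * h)"
    and "(g * C3 * h) * (g * I1) = (g * I1) * shift_mat r"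
proof -
  from assms(1) have C: "C1 \<in> carrier_mat n n" "C2 \<in> carrier_mat n n" "C3 \<in> carrier_mat n n"
      "I1 \<in> carrier_mat n r"
    and rel: "C3 * C1 = C1 * C3" "C3 * C2 = C2 * C3" "C3 * I1 = I1 * shift_mat r"
    unfolding cyclic_rep_def by auto
  have g: "g \<in> carrier_mat n n"
    using assms(2) unfolding gl_pair_def by auto
  have A: "shift_mat r \<in> (carrier_mat r r :: 'k mat set)"
    unfolding shift_mat_def by simp
  show "(g * C3 * h) * (g * C1 * h) = (g * C1 * h) * (g * C3 * h)"
    and "(g * C3 * h) * (g * C2 * h) = (g * C2 * h) * (g * C3 * h)"
    using conj_mult_conj[OF assms(2)] C rel by metis+
  show "(g * C3 * h) * (g * I1) = (g * I1) * shift_mat r"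
    using conj_mult_left_action[OF assms(2) C(3,4)] rel(3) g C(4) A by simp
qed

lemma gl_pair_mult:
  assumes "gl_pair n g h" "gl_pair n g' h'"
  shows "gl_pair n (g' * g) (h * h')"
proof -
  from assms have g: "g \<in> carrier_mat n n" "h \<in> carrier_mat n n" "g * h = 1\<^sub>m n" "h * g = 1\<^sub>m n"
    and g': "g' \<in> carrier_mat n n" "h' \<in> carrier_mat n n" "g' * h' = 1\<^sub>m n" "h' * g' = 1\<^sub>m n"
    unfolding gl_pair_def by auto
  have "g * (h * h') = h'" "h' * (g' * g) = g"
    using g g' by (simp_all del: assoc_mult_mat
        add: assoc_mult_mat[OF g(1,2) g'(2), symmetric] assoc_mult_mat[OF g'(2,1) g(1), symmetric])
  then have "(g' * g) * (h * h') = 1\<^sub>m n" "(h * h') * (g' * g) = 1\<^sub>m n"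
    using g g' by (simp_all only: assoc_mult_mat[OF g'(1) g(1) mult_carrier_mat[OF g(2) g'(2)]]
        assoc_mult_mat[OF g(2) g'(2) mult_carrier_mat[OF g'(1) g(1)]])
  then show ?thesis
    unfolding gl_pair_def using g g' by simp
qed

lemma gl_pair_cancel_left:
  fixes U V :: "'k::field mat"
  assumes "gl_pair n g h" "g' \<in> carrier_mat n n" "U \<in> carrier_mat n k" "V \<in> carrier_mat n k"
    and "g' * U = g * V"
  shows "V = (h * g') * U"
proof -
  from assms(1) have g: "g \<in> carrier_mat n n" "h \<in> carrier_mat n n" "h * g = 1\<^sub>m n"
    unfolding gl_pair_def by auto
  have "V = (h * g) * V" using g assms(4) by (simp del: assoc_mult_mat)
  also have "\<dots> = h * (g * V)" using assoc_mult_mat[OF g(2,1) assms(4)] .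
  also have "\<dots> = h * (g' * U)" using assms(5) by simp
  also have "\<dots> = (h * g') * U" using g assms(2,3) by simp
  finally show ?thesis .
qed

lemma gl_pair_cancel_right:
  fixes U V :: "'k::field mat"
  assumes "gl_pair n g h" "h' \<in> carrier_mat n n" "U \<in> carrier_mat k n" "V \<in> carrier_mat k n"
    and "U * h' = V * h"
  shows "V = U * (h' * g)"
proof -
  from assms(1) have g: "g \<in> carrier_mat n n" "h \<in> carrier_mat n n" "h * g = 1\<^sub>m n"
    unfolding gl_pair_def by auto
  have "V = V * (h * g)" using g assms(4) by (simp del: assoc_mult_mat)
  also have "\<dots> = (V * h) * g" using assoc_mult_mat[OF assms(4) g(2,1)] by simp
  also have "\<dots> = (U * h') * g" using assms(5) by simp
  also have "\<dots> = U * (h' * g)" using g assms(2,3) by simp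
  finally show ?thesis .
qed

lemma cyclic_equiv_if_common_translate:
  fixes C1 :: "'k::field mat"
  assumes gl1: "gl_pair n g1 h1" and gl2: "gl_pair n g2 h2"
    and carrier: "C1 \<in> carrier_mat n n" "C2 \<in> carrier_mat n n" "C3 \<in> carrier_mat n n"
      "D1 \<in> carrier_mat n n" "D2 \<in> carrier_mat n n" "D3 \<in> carrier_mat n n"
      "I1 \<in> carrier_mat n r" "I2 \<in> carrier_mat n r" "J1 \<in> carrier_mat r n" "J2 \<in> carrier_mat r n"
    and eq: "g1 * C1 * h1 = g2 * D1 * h2" "g1 * C2 * h1 = g2 * D2 * h2"
      "g1 * C3 * h1 = g2 * D3 * h2" "g1 * I1 = g2 * I2" "J1 * h1 = J2 * h2"
  shows "cyclic_equiv n (C1, C2, C3, I1, J1) (D1, D2, D3, I2, J2)"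
proof -
  from gl1 gl2 have g: "g1 \<in> carrier_mat n n" "h1 \<in> carrier_mat n n"
      "g2 \<in> carrier_mat n n" "h2 \<in> carrier_mat n n"
    unfolding gl_pair_def by auto
  have "gl_pair n h2 g2"
    using gl2 unfolding gl_pair_def by auto
  with gl1 have gl: "gl_pair n (h2 * g1) (h1 * g2)"
    by (rule gl_pair_mult)
  have conj: "V = (h2 * g1) * U * (h1 * g2)"
    if "U \<in> carrier_mat n n" "V \<in> carrier_mat n n" "g1 * U * h1 = g2 * V * h2" for U V
  proof -
    have "g2 * V = (g1 * U) * (h1 * g2)"
      using that g by (intro gl_pair_cancel_right[OF gl2 g(2) _ _ that(3), where k = n]) simp_all
    also have "\<dots> = g1 * (U * (h1 * g2))"
      using assoc_mult_mat[OF g(1) that(1) mult_carrier_mat[OF g(2,3)]] .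
    finally have "V = (h2 * g1) * (U * (h1 * g2))"
      using that g by (intro gl_pair_cancel_left[OF gl2 g(1), where k = n]) simp_all
    then show ?thesis
      using assoc_mult_mat[OF mult_carrier_mat[OF g(4,1)] that(1) mult_carrier_mat[OF g(2,3)]]
      by simp
  qed
  show ?thesis
    unfolding cyclic_equiv_def
    using gl conj[OF carrier(1,4) eq(1)] conj[OF carrier(2,5) eq(2)] conj[OF carrier(3,6) eq(3)]
      gl_pair_cancel_left[OF gl2 g(1) carrier(7,8) eq(4)]
      gl_pair_cancel_right[OF gl2 g(2) carrier(9,10) eq(5)]
    by auto
qed

theorem lemma3p5:
  fixes \<phi> :: "complex \<Rightarrow> 'k::field"
    and r n :: nat
    and B1 B2 I J :: "'k mat"
    and X Y :: "'k mat \<times> 'k mat \<times> 'k mat \<times> 'k mat \<times> 'k mat"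
  assumes "complex_embedding \<phi>"
    and "stable_ADHM r n B1 B2 I J"
    and "case X of (C1, C2, C3, I', J') \<Rightarrow>
           cyclic_rep r n C1 C2 C3 I' J' \<and> ADHM_equiv n (C1, C2, I', J') (B1, B2, I, J)"
    and "case Y of (D1, D2, D3, I'', J'') \<Rightarrow>
           cyclic_rep r n D1 D2 D3 I'' J'' \<and> ADHM_equiv n (D1, D2, I'', J'') (B1, B2, I, J)"
  shows "cyclic_equiv n X Y"
proof -
  obtain C1 C2 C3 I1 J1 where X: "X = (C1, C2, C3, I1, J1)" by (cases X) auto
  obtain D1 D2 D3 I2 J2 where Y: "Y = (D1, D2, D3, I2, J2)" by (cases Y) auto
  from assms(3) X have cx: "cyclic_rep r n C1 C2 C3 I1 J1"
    and "ADHM_equiv n (C1, C2, I1, J1) (B1, B2, I, J)" by auto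
  then obtain g1 h1 where gl1: "gl_pair n g1 h1" and e1: "B1 = g1 * C1 * h1" "B2 = g1 * C2 * h1"
    "I = g1 * I1" "J = J1 * h1" unfolding ADHM_equiv_def by auto
  from assms(4) Y have cy: "cyclic_rep r n D1 D2 D3 I2 J2"
    and "ADHM_equiv n (D1, D2, I2, J2) (B1, B2, I, J)" by auto
  then obtain g2 h2 where gl2: "gl_pair n g2 h2" and e2: "B1 = g2 * D1 * h2" "B2 = g2 * D2 * h2"
    "I = g2 * I2" "J = J2 * h2" unfolding ADHM_equiv_def by auto
  from cx cy have carrier: "C1 \<in> carrier_mat n n" "C2 \<in> carrier_mat n n" "C3 \<in> carrier_mat n n"
      "D1 \<in> carrier_mat n n" "D2 \<in> carrier_mat n n" "D3 \<in> carrier_mat n n"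
      "I1 \<in> carrier_mat n r" "I2 \<in> carrier_mat n r" "J1 \<in> carrier_mat r n" "J2 \<in> carrier_mat r n"
    unfolding cyclic_rep_def by auto
  note rel1 = cyclic_rep_conj_relations[OF cx gl1, folded e1(1-3)]
    and rel2 = cyclic_rep_conj_relations[OF cy gl2, folded e2(1-3)]
  have "g1 * C3 * h1 = g2 * D3 * h2"
  proof (rule stable_ADHM_hom_unique[OF assms(2)])
    show "g1 * C3 * h1 \<in> carrier_mat n n" "g2 * D3 * h2 \<in> carrier_mat n n"
      using gl1 gl2 carrier unfolding gl_pair_def by auto
    show "B1 \<in> carrier_mat n n" "B2 \<in> carrier_mat n n"
      using assms(2) unfolding stable_ADHM_def by auto
    show "(g1 * C3 * h1) * I = (g2 * D3 * h2) * I"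
      using rel1(3) rel2(3) by simp
  qed (use rel1 rel2 in simp_all)
  with carrier e1 e2 show ?thesis
    unfolding X Y by (intro cyclic_equiv_if_common_translate[OF gl1 gl2 carrier]) simp_all
qed

end
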